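(* For any finite multisets of formulas $\Pi$ and $\Sigma$, the inference rule $\mathsf{wk}_{\Pi,\Sigma}$: from $\Gamma\Rightarrow\Delta$ infer $\Pi,\Gamma\Rightarrow\Delta,\Sigma$ (for arbitrary $\Gamma,\Delta$) is strongly admissible in $\mathsf{Grz}_\infty+\mathsf{cut}$.
   Context: Formulas are built from $\bot$ and atoms by $\to$ and $\Box$; sequents $\Gamma\Rightarrow\Delta$ have finite multisets of formulas on each side; $\Box\Pi$ denotes $\{\Box B:B\in\Pi\}$. The calculus $\mathsf{Grz}_\infty+\mathsf{cut}$ has initial sequents $\Gamma,p\Rightarrow p,\Delta$ ($p$ atomic), $\Gamma,\bot\Rightarrow\Delta$, and rules $(\to_L)$ from $\Gamma,B\Rightarrow\Delta$ and $\Gamma\Rightarrow A,\Delta$ infer $\Gamma,A\to B\Rightarrow\Delta$; $(\to_R)$ from $\Gamma,A\Rightarrow B,\Delta$ infer $\Gamma\Rightarrow A\to B,\Delta$; $(\mathsf{refl})$ from $\Gamma,B,\Box B\Rightarrow\Delta$ infer $\Gamma,\Box B\Rightarrow\Delta$; $(\Box)$ from left premise $\Gamma,\Box\Pi\Rightarrow A,\Delta$ and right premise $\Box\Pi\Rightarrow A$ infer $\Gamma,\Box\Pi\Rightarrow\Box A,\Delta$; $(\mathsf{cut})$ from $\Gamma\Rightarrow A,\Delta$ and $\Gamma,A\Rightarrow\Delta$ infer $\Gamma\Rightarrow\Delta$. An $\infty$-proof is a possibly infinite tree of sequents built by these rules with leaves labelled by initial sequents, in which every infinite branch passes through a right premise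 of $(\Box)$ infinitely often; $\mathcal P$ is the set of all $\infty$-proofs. The $n$-fragment of an $\infty$-proof is the finite tree obtained by cutting every branch at the $n$-th (from the root) right premise of $(\Box)$; the main fragment is the $1$-fragment; the local height $|\pi|$ is the length of the longest branch of the main fragment (an $\infty$-proof consisting only of an initial sequent has height $0$). Write $\pi\sim_n\tau$ if the $n$-fragments of $\pi,\tau$ coincide, and $\pi\sim_0\tau$ always. $\mathcal P_n$ is the set of $\infty$-proofs with no application of $(\mathsf{cut})$ in their $n$-fragment, and $\mathcal P_0=\mathcal P$. A single-premise rule is strongly admissible in $\mathsf{Grz}_\infty+\mathsf{cut}$ if there is a mapping $\mathsf u:\mathcal P\to\mathcal P$ such that: (i) $\mathsf u$ is non-expansive: $\pi\sim_n\pi'$ implies $\mathsf u(\pi)\sim_n\mathsf u(\pi')$ for all $n$; (ii) $\mathsf u$ is adequate: $\pi\in\mathcal P_n$ implies $\mathsf u(\pi)\in\mathcal P_n$ for all $n$; (iii) $|\mathsf u(\pi)|\le|\pi|$ for all $\pi\in\mathcal P$; (iv) for every instance of the rule, $\mathsf u$ maps every $\infty$-proof of its premise to an $\infty$-proof of its conclusion. *)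

theory Defs
  imports Main "HOL-Library.Multiset" "HOL-Library.Extended_Nat"
begin

datatype fm = Bot | Atom nat | Imp fm fm | Box fm

type_synonym sequent = "fm multiset \<times> fm multiset"

datatype rule = AxAt | AxBot | ImpL | ImpR | Refl | BoxR | Cut

text \<open>A tree of sequents, each node annotated with the rule applied at it;
the list of children is the list of premises (for BoxR and Cut the second
child is the right premise). Trees may be infinite.\<close>

codatatype ptree = PNode (root: sequent) (rl: rule) (subs: "ptree list")

definition rule_ok :: "sequent \<Rightarrow> rule \<Rightarrow> sequent list \<Rightarrow> bool" where
  "rule_ok s r cs \<longleftrightarrow>
    (case r of
      AxAt \<Rightarrow> cs = [] \<and> (\<exists>G D p. s = (G + {#Atom p#}, {#Atom p#} + D))
    | AxBot \<Rightarrow> cs = [] \<and> (\<exists>G D. s = (G + {#Bot#}, D))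
    | ImpL \<Rightarrow> (\<exists>G D A B. s = (G + {#Imp A B#}, D) \<and>
                 cs = [(G + {#B#}, D), (G, {#A#} + D)])
    | ImpR \<Rightarrow> (\<exists>G D A B. s = (G, {#Imp A B#} + D) \<and>
                 cs = [(G + {#A#}, {#B#} + D)])
    | Refl \<Rightarrow> (\<exists>G D B. s = (G + {#Box B#}, D) \<and>
                 cs = [(G + {#B#} + {#Box B#}, D)])
    | BoxR \<Rightarrow> (\<exists>G P A D. s = (G + image_mset Box P, {#Box A#} + D) \<and>
                 cs = [(G + image_mset Box P, {#A#} + D), (image_mset Box P, {#A#})])
    | Cut \<Rightarrow> (\<exists>G D A. s = (G, D) \<and> cs = [(G, {#A#} + D), (G + {#A#}, D)]))"

primrec sub :: "ptree \<Rightarrow> nat list \<Rightarrow> ptree option" where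
  "sub t [] = Some t"
| "sub t (i # p) = (if i < length (subs t) then sub (subs t ! i) p else None)"

definition node :: "ptree \<Rightarrow> nat list \<Rightarrow> ptree" where
  "node t p = the (sub t p)"

definition valid_pos :: "ptree \<Rightarrow> nat list \<Rightarrow> bool" where
  "valid_pos t p \<longleftrightarrow> sub t p \<noteq> None"

definition right_box_step :: "ptree \<Rightarrow> nat list \<Rightarrow> nat \<Rightarrow> bool" where
  "right_box_step t p k \<longleftrightarrow> rl (node t (take k p)) = BoxR \<and> p ! k = 1"

definition is_inf_proof :: "ptree \<Rightarrow> bool" where
  "is_inf_proof t \<longleftrightarrow>
     (\<forall>p. valid_pos t p \<longrightarrow>
        rule_ok (root (node t p)) (rl (node t p)) (map root (subs (node t p))))
   \<and> (\<forall>f :: nat \<Rightarrow> nat. (\<forall>k. valid_pos t (map f [0..<k])) \<longrightarrow>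
        (\<exists>\<^sub>\<infinity>k. rl (node t (map f [0..<k])) = BoxR \<and> f k = 1))"

definition Proofs :: "ptree set" ("\<P>") where
  "\<P> = {t. is_inf_proof t}"

definition cnt :: "ptree \<Rightarrow> nat list \<Rightarrow> nat" where
  "cnt t p = card {k. k < length p \<and> right_box_step t p k}"

text \<open>Nodes with cnt t p = n are leaves of the fragment
(the n-th right premises); nodes with cnt t p < n are internal, i.e. their rule
application belongs to the fragment.\<close>

definition in_frag :: "nat \<Rightarrow> ptree \<Rightarrow> nat list \<Rightarrow> bool" where
  "in_frag n t p \<longleftrightarrow> valid_pos t p \<and> (p = [] \<or> cnt t (butlast p) < n)"

definition frag :: "nat \<Rightarrow> ptree \<Rightarrow> nat list \<Rightarrow> (sequent \<times> rule option) option" where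
  "frag n t p = (if in_frag n t p
                 then Some (root (node t p), if cnt t p < n then Some (rl (node t p)) else None)
                 else None)"

definition sim :: "nat \<Rightarrow> ptree \<Rightarrow> ptree \<Rightarrow> bool" where
  "sim n t t' \<longleftrightarrow> n = 0 \<or> frag n t = frag n t'"

definition local_height :: "ptree \<Rightarrow> enat" where
  "local_height t = (SUP p \<in> {p. in_frag 1 t p}. enat (length p))"

definition cutfree_frag :: "nat \<Rightarrow> ptree \<Rightarrow> bool" where
  "cutfree_frag n t \<longleftrightarrow>
     (\<forall>p. in_frag n t p \<and> cnt t p < n \<longrightarrow> rl (node t p) \<noteq> Cut)"

definition Proofs_n :: "nat \<Rightarrow> ptree set" where
  "Proofs_n n = (if n = 0 then \<P> else {t \<in> \<P>. cutfree_frag n t})"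

text \<open>A single-premise rule is given by the relation R premise conclusion of its instances.\<close>

definition strongly_admissible :: "(sequent \<Rightarrow> sequent \<Rightarrow> bool) \<Rightarrow> bool" where
  "strongly_admissible R \<longleftrightarrow>
     (\<exists>u :: ptree \<Rightarrow> ptree.
        (\<forall>\<pi> \<in> \<P>. u \<pi> \<in> \<P>)
      \<and> (\<forall>n. \<forall>\<pi> \<in> \<P>. \<forall>\<pi>' \<in> \<P>. sim n \<pi> \<pi>' \<longrightarrow> sim n (u \<pi>) (u \<pi>'))
      \<and> (\<forall>n. \<forall>\<pi> \<in> Proofs_n n. u \<pi> \<in> Proofs_n n)
      \<and> (\<forall>\<pi> \<in> \<P>. local_height (u \<pi>) \<le> local_height \<pi>)
      \<and> (\<forall>s s' \<pi>. R s s' \<and> \<pi> \<in> \<P> \<and> root \<pi> = s \<longrightarrow> root (u \<pi>) = s'))"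

definition wk_rule :: "fm multiset \<Rightarrow> fm multiset \<Rightarrow> sequent \<Rightarrow> sequent \<Rightarrow> bool" where
  "wk_rule Pii Sig s s' \<longleftrightarrow> s' = (Pii + fst s, snd s + Sig)"

end

theory Submission
  imports Defs
begin

text \<open>Add the side formulas to every sequent of the main fragment and leave the subproofs
above the right premises of (Box) untouched. Rules and tree shape do not change, so every
fragment keeps its positions, rules, cut-freeness and local height, and n-fragments that agree
before still agree after. The rule instances stay correct because every rule carries arbitrary
contexts in its conclusion and main-fragment premises, while the right premise of (Box), which
has no context, is kept as it was.\<close>

definition main_premises :: "('a \<Rightarrow> 'a) \<Rightarrow> rule \<Rightarrow> 'a list \<Rightarrow> 'a list" where
  "main_premises f r xs =
     map (\<lambda>(i, x). if r = BoxR \<and> i = 1 then x else f x) (zip [0..<length xs] xs)"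

primcorec map_main :: "(sequent \<Rightarrow> sequent) \<Rightarrow> ptree \<Rightarrow> ptree" where
  "map_main f t = PNode (f (root t)) (rl t)
     (map (\<lambda>(i, c). if rl t = BoxR \<and> i = 1 then c else map_main f c)
        (zip [0..<length (subs t)] (subs t)))"

lemma length_subs_map_main [simp]: "length (subs (map_main f t)) = length (subs t)"
  by simp

lemma nth_subs_map_main:
  "i < length (subs t) \<Longrightarrow>
   subs (map_main f t) ! i = (if rl t = BoxR \<and> i = 1 then subs t ! i else map_main f (subs t ! i))"
  by simp

lemma map_root_subs_map_main:
  "map root (subs (map_main f t)) = main_premises f (rl t) (map root (subs t))"
  by (rule nth_equalityI) (auto simp: main_premises_def nth_subs_map_main simp del: map_main.simps(3))

declare map_main.simps(3) [simp del]

lemma right_box_step_Cons_0: "right_box_step t (i # p) 0 \<longleftrightarrow> rl t = BoxR \<and> i = 1"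
  by (simp add: right_box_step_def node_def)

lemma right_box_step_Cons_Suc:
  "i < length (subs t) \<Longrightarrow> right_box_step t (i # p) (Suc k) = right_box_step (subs t ! i) p k"
  by (simp add: right_box_step_def node_def)

lemma cnt_Cons:
  assumes "i < length (subs t)"
  shows "cnt t (i # p) = (if rl t = BoxR \<and> i = 1 then 1 else 0) + cnt (subs t ! i) p"
proof -
  let ?A = "{k. k < length p \<and> right_box_step (subs t ! i) p k}"
  have "{k. k < length (i # p) \<and> right_box_step t (i # p) k} =
        (if rl t = BoxR \<and> i = 1 then {0} else {}) \<union> Suc ` ?A"
    using assms
    by (auto simp: right_box_step_Cons_0 right_box_step_Cons_Suc image_iff less_Suc_eq_0_disj)
  then show ?thesis
    unfolding cnt_def by (auto simp: card_image)
qed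

lemma sub_append: "sub t (p @ q) = (case sub t p of None \<Rightarrow> None | Some s \<Rightarrow> sub s q)"
  by (induction p arbitrary: t) auto

lemma valid_pos_take: "valid_pos t p \<Longrightarrow> valid_pos t (take k p)"
  using sub_append[of t "take k p" "drop k p"]
  by (auto simp: valid_pos_def split: option.splits)

lemma right_box_step_take: "j < k \<Longrightarrow> right_box_step t (take k p) j = right_box_step t p j"
  by (simp add: right_box_step_def min_def)

lemma cnt_take_mono: "k \<le> m \<Longrightarrow> cnt t (take k p) \<le> cnt t (take m p)"
  unfolding cnt_def by (intro card_mono) (auto simp: right_box_step_take)

lemma in_frag_take:
  assumes "in_frag n t p" "k < length p"
  shows "in_frag n t (take k p) \<and> cnt t (take k p) < n"
proof -
  have "cnt t (butlast p) < n"
    using assms by (auto simp: in_frag_def)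
  moreover have "cnt t (take k p) \<le> cnt t (butlast p)"
    using assms(2) cnt_take_mono[of k "length p - 1" t p] by (simp add: butlast_conv_take)
  ultimately have "cnt t (take k p) < n"
    by linarith
  moreover have "cnt t (butlast (take k p)) \<le> cnt t (take k p)"
    using assms(2) cnt_take_mono[of "k - 1" k t p] by (simp add: butlast_take)
  ultimately show ?thesis
    using assms valid_pos_take by (auto simp: in_frag_def)
qed

text \<open>The count along a position of the n-fragment is determined by the n-fragment,
because every proper ancestor is an internal node of it, whose rule the fragment records.\<close>

lemma cnt_eq_if_frag_eq:
  assumes "frag n t = frag n t'" "in_frag n t p"
  shows "cnt t p = cnt t' p"
proof -
  have "right_box_step t p k = right_box_step t' p k" if "k < length p" for k
  proof -
    have "in_frag n t (take k p)" "cnt t (take k p) < n"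
      using in_frag_take[OF assms(2) that] by auto
    moreover have "frag n t (take k p) = frag n t' (take k p)"
      using assms(1) by simp
    ultimately have "rl (node t (take k p)) = rl (node t' (take k p))"
      unfolding frag_def by (auto split: if_splits)
    then show ?thesis
      by (simp add: right_box_step_def)
  qed
  then show ?thesis
    unfolding cnt_def by (metis (lifting))
qed

lemma sub_map_main:
  "sub (map_main f t) p = map_option (\<lambda>s. if cnt t p = 0 then map_main f s else s) (sub t p)"
proof (induction p arbitrary: t)
  case Nil
  then show ?case by (simp add: cnt_def)
next
  case (Cons i p)
  show ?case
  proof (cases "i < length (subs t)")
    case True
    show ?thesis
    proof (cases "rl t = BoxR \<and> i = 1")
      case True
      with \<open>i < length (subs t)\<close> show ?thesis
        by (cases "sub (subs t ! i) p") (auto simp: cnt_Cons nth_subs_map_main)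
    next
      case False
      then have "subs (map_main f t) ! i = map_main f (subs t ! i)"
        and "cnt t (i # p) = cnt (subs t ! i) p"
        using \<open>i < length (subs t)\<close> by (auto simp: nth_subs_map_main cnt_Cons)
      with \<open>i < length (subs t)\<close> Cons.IH[of "subs t ! i"] show ?thesis
        by simp
    qed
  qed simp
qed

lemma valid_pos_map_main [simp]: "valid_pos (map_main f t) p = valid_pos t p"
  by (simp add: valid_pos_def sub_map_main)

lemma node_map_main:
  "valid_pos t p \<Longrightarrow>
   node (map_main f t) p = (if cnt t p = 0 then map_main f (node t p) else node t p)"
  by (auto simp: node_def sub_map_main valid_pos_def)

lemma rl_node_map_main [simp]: "rl (node (map_main f t) p) = rl (node t p)"
  by (cases "sub t p") (auto simp: node_def sub_map_main)

lemma cnt_map_main [simp]: "cnt (map_main f t) p = cnt t p"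
  by (simp add: cnt_def right_box_step_def)

lemma in_frag_map_main [simp]: "in_frag n (map_main f t) p = in_frag n t p"
  by (simp add: in_frag_def)

lemma local_height_map_main [simp]: "local_height (map_main f t) = local_height t"
  by (simp add: local_height_def)

lemma cutfree_frag_map_main [simp]: "cutfree_frag n (map_main f t) = cutfree_frag n t"
  by (simp add: cutfree_frag_def)

lemma frag_map_main:
  "frag n (map_main f t) p =
   map_option (apfst (if cnt t p = 0 then f else id)) (frag n t p)"
  by (auto simp: frag_def node_map_main in_frag_def)

lemma frag_map_main_cong:
  assumes "frag n t = frag n t'"
  shows "frag n (map_main f t) = frag n (map_main f t')"
proof
  fix p
  show "frag n (map_main f t) p = frag n (map_main f t') p"
  proof (cases "in_frag n t p")
    case True
    then show ?thesis
      using assms cnt_eq_if_frag_eq[OF assms True] by (simp add: frag_map_main)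
  next
    case False
    then have "frag n t p = None" "frag n t' p = None"
      using assms by (auto simp: frag_def dest: fun_cong[of _ _ p] split: if_splits)
    then show ?thesis
      by (simp add: frag_map_main)
  qed
qed

lemma is_inf_proof_map_main:
  assumes f: "\<And>s r cs. rule_ok s r cs \<Longrightarrow> rule_ok (f s) r (main_premises f r cs)"
    and t: "is_inf_proof t"
  shows "is_inf_proof (map_main f t)"
  unfolding is_inf_proof_def
proof (intro conjI allI impI)
  fix p
  assume "valid_pos (map_main f t) p"
  then have p: "valid_pos t p" by simp
  then have "rule_ok (root (node t p)) (rl (node t p)) (map root (subs (node t p)))"
    using t by (simp add: is_inf_proof_def)
  then show "rule_ok (root (node (map_main f t) p)) (rl (node (map_main f t) p))
               (map root (subs (node (map_main f t) p)))"
    using f by (simp add: node_map_main[OF p] map_root_subs_map_main)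
next
  fix g :: "nat \<Rightarrow> nat"
  assume "\<forall>k. valid_pos (map_main f t) (map g [0..<k])"
  then show "\<exists>\<^sub>\<infinity>k. rl (node (map_main f t) (map g [0..<k])) = BoxR \<and> g k = 1"
    using t by (simp add: is_inf_proof_def)
qed

definition weaken :: "fm multiset \<Rightarrow> fm multiset \<Rightarrow> sequent \<Rightarrow> sequent" where
  "weaken P S s = (P + fst s, snd s + S)"

lemma rule_ok_weaken:
  assumes "rule_ok s r cs"
  shows "rule_ok (weaken P S s) r (main_premises (weaken P S) r cs)"
proof (cases r)
  case AxAt
  with assms obtain G D p where s: "s = (G + {#Atom p#}, {#Atom p#} + D)"
    and cs: "cs = []"
    by (auto simp: rule_ok_def)
  show ?thesis
    unfolding AxAt s cs rule_ok_def weaken_def main_premises_def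
    by (simp only: rule.case, intro exI[of _ "P + G"] exI[of _ "D + S"] exI[of _ p] conjI)
       (simp_all add: ac_simps)
next
  case AxBot
  with assms obtain G D where s: "s = (G + {#Bot#}, D)"
    and cs: "cs = []"
    by (auto simp: rule_ok_def)
  show ?thesis
    unfolding AxBot s cs rule_ok_def weaken_def main_premises_def
    by simp
next
  case ImpL
  with assms obtain G D A B where s: "s = (G + {#Imp A B#}, D)"
    and cs: "cs = [(G + {#B#}, D), (G, {#A#} + D)]"
    by (auto simp: rule_ok_def)
  show ?thesis
    unfolding ImpL s cs rule_ok_def weaken_def main_premises_def
    by (simp only: rule.case, intro exI[of _ "P + G"] exI[of _ "D + S"] exI[of _ A] exI[of _ B] conjI)
       (simp_all add: ac_simps)
next
  case ImpR
  with assms obtain G D A B where s: "s = (G, {#Imp A B#} + D)"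
    and cs: "cs = [(G + {#A#}, {#B#} + D)]"
    by (auto simp: rule_ok_def)
  show ?thesis
    unfolding ImpR s cs rule_ok_def weaken_def main_premises_def
    by (simp only: rule.case, intro exI[of _ "P + G"] exI[of _ "D + S"] exI[of _ A] exI[of _ B] conjI)
       (simp_all add: ac_simps)
next
  case Refl
  with assms obtain G D B where s: "s = (G + {#Box B#}, D)"
    and cs: "cs = [(G + {#B#} + {#Box B#}, D)]"
    by (auto simp: rule_ok_def)
  show ?thesis
    unfolding Refl s cs rule_ok_def weaken_def main_premises_def
    by (simp only: rule.case, intro exI[of _ "P + G"] exI[of _ "D + S"] exI[of _ B] conjI)
       (simp_all add: ac_simps)
next
  case BoxR
  with assms obtain G Q A D where s: "s = (G + image_mset Box Q, {#Box A#} + D)"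
    and cs: "cs = [(G + image_mset Box Q, {#A#} + D), (image_mset Box Q, {#A#})]"
    by (auto simp: rule_ok_def)
  show ?thesis
    unfolding BoxR s cs rule_ok_def weaken_def main_premises_def
    by (simp only: rule.case, intro exI[of _ "P + G"] exI[of _ Q] exI[of _ A] exI[of _ "D + S"] conjI)
       (simp_all add: ac_simps)
next
  case Cut
  with assms show ?thesis
    by (auto simp: rule_ok_def weaken_def main_premises_def)
qed

theorem lemma5p1:
  fixes Pii Sig :: "fm multiset"
  shows "strongly_admissible (wk_rule Pii Sig)"
  unfolding strongly_admissible_def
proof (intro exI[of _ "map_main (weaken Pii Sig)"] conjI ballI allI impI)
  show proof_preserved: "map_main (weaken Pii Sig) \<pi> \<in> \<P>" if "\<pi> \<in> \<P>" for \<pi>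
    using that rule_ok_weaken is_inf_proof_map_main by (simp add: Proofs_def)
  show "map_main (weaken Pii Sig) \<pi> \<in> Proofs_n n" if "\<pi> \<in> Proofs_n n" for n \<pi>
    using that proof_preserved by (auto simp: Proofs_n_def)
  show "sim n (map_main (weaken Pii Sig) \<pi>) (map_main (weaken Pii Sig) \<pi>')"
    if "sim n \<pi> \<pi>'" for n \<pi> \<pi>'
    using that frag_map_main_cong unfolding sim_def by blast
  show "local_height (map_main (weaken Pii Sig) \<pi>) \<le> local_height \<pi>" for \<pi>
    by simp
  show "root (map_main (weaken Pii Sig) \<pi>) = s'"
    if "wk_rule Pii Sig s s' \<and> \<pi> \<in> \<P> \<and> root \<pi> = s" for s s' \<pi>
    using that by (auto simp: wk_rule_def weaken_def)
qed

end
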